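(* Let $\mathcal G=(\mathcal V,\mathcal E)$ be a weakly connected digraph without self-loops with node set partitioned as $\mathcal V=\mathcal M\cup\mathcal P$ (nodes in $\mathcal M$: DGUs and loads; nodes in $\mathcal P$: power lines), such that every edge has exactly one endpoint in $\mathcal M$ and one in $\mathcal P$, and each line $l\in\mathcal P$ has exactly one in-neighbour $a\in\mathcal M$ and exactly one out-neighbour $b\in\mathcal M$. To each node $k\in\mathcal M$ associate a voltage $V_k\in\mathbb R^2$, interaction output $z_k=V_k$ and interaction input \[ d_k=-\sum_{l\in\mathcal N_k^+}I_l+\sum_{l\in\mathcal N_k^-}I_l , \] and to each line $l\in\mathcal P$ (from $a$ to $b$) associate a current $I_l\in\mathbb R^2$, interaction output $z_l=[I_l^\top,-I_l^\top]^\top\in\mathbb R^4$ and interaction input $d_l=[V_a^\top,V_b^\top]^\top$. Then this interconnection is skew-symmetric: there exist matrices $\phi_{vw}$ of appropriate dimensions such that for every $v\in\mathcal V$, \[ d_v=\sum_{w\in\mathcal N_v}\phi_{vw}z_w=\sum_{w\in\mathcal N^+_v}\phi_{vw}z_w-\sum_{w\in\mathcal N^-_v}\phi_{wv}^\top z_w , \] i.e. $\phi_{vw}=-\phi_{wv}^\top$ for all neighbouring $v,w$, so that the stacked relation $d=\Phi z$ has $\Phi=-\Phi^\top$.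
   Context: For a node $v$ of a digraph, $\mathcal N_v^+=\{w:(v,w)\in\mathcal E\}$ denotes the out-neighbours, $\mathcal N_v^-=\{w:(w,v)\in\mathcal E\}$ the in-neighbours and $\mathcal N_v=\mathcal N_v^+\cup\mathcal N_v^-$. The edge orientation gives the reference direction of the positive line current. All electrical vectors are dq components. *)

theory Defs
  imports Complex_Main
begin

text \<open>Digraph on node type 'a with node set Vs and edge set E.
  Vectors in R^n are represented as functions nat => real whose
  components 0..n-1 are relevant; matrices as nat => nat => real.\<close>

definition outN :: "('a \<times> 'a) set \<Rightarrow> 'a \<Rightarrow> 'a set" where
  "outN E v = {w. (v, w) \<in> E}"

definition inN :: "('a \<times> 'a) set \<Rightarrow> 'a \<Rightarrow> 'a set" where
  "inN E v = {w. (w, v) \<in> E}"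

definition nbr :: "('a \<times> 'a) set \<Rightarrow> 'a \<Rightarrow> 'a set" where
  "nbr E v = outN E v \<union> inN E v"

definition weakly_connected :: "'a set \<Rightarrow> ('a \<times> 'a) set \<Rightarrow> bool" where
  "weakly_connected Vs E \<longleftrightarrow> (\<forall>u\<in>Vs. \<forall>v\<in>Vs. (u, v) \<in> (E \<union> E\<inverse>)\<^sup>*)"

definition dimv :: "'a set \<Rightarrow> 'a \<Rightarrow> nat" where
  "dimv M v = (if v \<in> M then 2 else 4)"

definition src :: "('a \<times> 'a) set \<Rightarrow> 'a \<Rightarrow> 'a" where
  "src E l = (THE a. (a, l) \<in> E)"

definition dst :: "('a \<times> 'a) set \<Rightarrow> 'a \<Rightarrow> 'a" where
  "dst E l = (THE b. (l, b) \<in> E)"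

definition zvec :: "'a set \<Rightarrow> ('a \<Rightarrow> nat \<Rightarrow> real) \<Rightarrow> ('a \<Rightarrow> nat \<Rightarrow> real)
    \<Rightarrow> 'a \<Rightarrow> nat \<Rightarrow> real" where
  "zvec M Vt I v = (if v \<in> M then Vt v
     else (\<lambda>i. if i < 2 then I v i else - I v (i - 2)))"

definition dvec :: "'a set \<Rightarrow> ('a \<times> 'a) set \<Rightarrow> ('a \<Rightarrow> nat \<Rightarrow> real)
    \<Rightarrow> ('a \<Rightarrow> nat \<Rightarrow> real) \<Rightarrow> 'a \<Rightarrow> nat \<Rightarrow> real" where
  "dvec M E Vt I v = (if v \<in> M
     then (\<lambda>i. - (\<Sum>l\<in>outN E v. I l i) + (\<Sum>l\<in>inN E v. I l i))
     else (\<lambda>i. if i < 2 then Vt (src E v) i else Vt (dst E v) (i - 2)))"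

end

theory Submission
  imports Defs
begin

text \<open>Each line l couples only to its two end nodes, through the 4x2 blocks
  [Id; 0] (towards its source) and [0; Id] (towards its target); putting the negated
  transposes on the node side makes the interconnection skew by construction. The
  line inputs [V_a; V_b] come out directly, and on a node k the transposed block
  extracts I_l or -I_l from z_l = [I_l; -I_l], which reproduces
  the signed sum of the adjacent line currents.\<close>

definition line_coupling :: "('a \<times> 'a) set \<Rightarrow> 'a \<Rightarrow> 'a \<Rightarrow> nat \<Rightarrow> nat \<Rightarrow> real" where
  "line_coupling E l k i j =
     (if (k, l) \<in> E \<and> i = j then 1 else 0) + (if (l, k) \<in> E \<and> i = j + 2 then 1 else 0)"

definition skew_coupling ::
    "'a set \<Rightarrow> 'a set \<Rightarrow> ('a \<times> 'a) set \<Rightarrow> 'a \<Rightarrow> 'a \<Rightarrow> nat \<Rightarrow> nat \<Rightarrow> real" where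
  "skew_coupling M P E v w i j =
     (if v \<in> P \<and> w \<in> M then line_coupling E v w i j
      else if v \<in> M \<and> w \<in> P then - line_coupling E w v j i
      else 0)"

lemma skew_coupling_antisym:
  "M \<inter> P = {} \<Longrightarrow> skew_coupling M P E v w i j = - skew_coupling M P E w v j i"
  by (auto simp: skew_coupling_def)

lemma skew_coupling_eq_0:
  "w \<notin> nbr E v \<Longrightarrow> skew_coupling M P E v w i j = 0"
  by (auto simp: skew_coupling_def line_coupling_def nbr_def outN_def inN_def)

lemma line_coupling_mult:
  assumes "i < 4"
  shows "(\<Sum>j<2. line_coupling E l k i j * x j) =
    (if (k, l) \<in> E \<and> i < 2 then x i else 0) + (if (l, k) \<in> E \<and> 2 \<le> i then x (i - 2) else 0)"
proof -
  have "i = 0 \<or> i = 1 \<or> i = 2 \<or> i = 3" using assms by auto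
  then show ?thesis
    by (elim disjE) (simp_all add: line_coupling_def eval_nat_numeral)
qed

lemma line_coupling_transpose_mult:
  assumes "i < 2"
  shows "(\<Sum>j<4. line_coupling E l k j i * (if j < 2 then y j else - y (j - 2))) =
    (if (k, l) \<in> E then y i else 0) - (if (l, k) \<in> E then y i else 0)"
proof -
  have "i = 0 \<or> i = 1" using assms by auto
  then show ?thesis
    by (elim disjE) (simp_all add: line_coupling_def eval_nat_numeral)
qed

locale line_network =
  fixes Vs M P :: "'a set" and E :: "('a \<times> 'a) set"
  assumes finite_nodes: "finite Vs"
    and edges_subset: "E \<subseteq> Vs \<times> Vs"
    and partition: "M \<union> P = Vs" "M \<inter> P = {}"
    and bipartite: "\<forall>(x, y)\<in>E. (x \<in> M \<and> y \<in> P) \<or> (x \<in> P \<and> y \<in> M)"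
    and line_ends: "\<forall>l\<in>P. (\<exists>!a. (a, l) \<in> E) \<and> (\<exists>!b. (l, b) \<in> E)"
begin

lemma finite_nbr: "finite (nbr E v)"
  by (rule finite_subset[OF _ finite_nodes])
    (use edges_subset in \<open>auto simp: nbr_def outN_def inN_def\<close>)

lemma nbr_of_node: "v \<in> M \<Longrightarrow> w \<in> nbr E v \<Longrightarrow> w \<in> P \<and> w \<notin> M"
  using bipartite partition(2) by (auto simp: nbr_def outN_def inN_def)

lemma nbr_of_line: "v \<in> P \<Longrightarrow> w \<in> nbr E v \<Longrightarrow> w \<in> M \<and> w \<notin> P"
  using bipartite partition(2) by (auto simp: nbr_def outN_def inN_def)

lemma line_endpoints:
  assumes "l \<in> P"
  obtains a b where "inN E l = {a}" "outN E l = {b}" "src E l = a" "dst E l = b"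
proof -
  obtain a where a: "(a, l) \<in> E" "\<And>a'. (a', l) \<in> E \<Longrightarrow> a' = a"
    using line_ends assms by blast
  obtain b where b: "(l, b) \<in> E" "\<And>b'. (l, b') \<in> E \<Longrightarrow> b' = b"
    using line_ends assms by blast
  show thesis
  proof (rule that)
    show "inN E l = {a}" unfolding inN_def using a(1) by (blast dest: a(2))
    show "outN E l = {b}" unfolding outN_def using b(1) by (blast dest: b(2))
    show "src E l = a" unfolding src_def using a by (rule the_equality)
    show "dst E l = b" unfolding dst_def using b by (rule the_equality)
  qed
qed

lemma dvec_node:
  assumes v: "v \<in> M" and i: "i < 2"
  shows "dvec M E Vt I v i =
    (\<Sum>w\<in>nbr E v. \<Sum>j<dimv M w. skew_coupling M P E v w i j * zvec M Vt I w j)"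
proof -
  have inner: "(\<Sum>j<dimv M w. skew_coupling M P E v w i j * zvec M Vt I w j) =
      (if w \<in> inN E v then I w i else 0) - (if w \<in> outN E v then I w i else 0)"
    if w: "w \<in> nbr E v" for w
  proof -
    have wP: "w \<in> P" "w \<notin> M" using nbr_of_node[OF v w] by auto
    have "(\<Sum>j<dimv M w. skew_coupling M P E v w i j * zvec M Vt I w j) =
        - (\<Sum>j<4. line_coupling E w v j i * (if j < 2 then I w j else - I w (j - 2)))"
      using v wP by (simp add: dimv_def skew_coupling_def zvec_def sum_negf)
    then show ?thesis
      using line_coupling_transpose_mult[OF i, of E w v "I w"] by (simp add: inN_def outN_def)
  qed
  have "(\<Sum>w\<in>nbr E v. \<Sum>j<dimv M w. skew_coupling M P E v w i j * zvec M Vt I w j) =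
      (\<Sum>w\<in>nbr E v \<inter> inN E v. I w i) - (\<Sum>w\<in>nbr E v \<inter> outN E v. I w i)"
    by (simp add: inner sum_subtractf sum.inter_restrict[OF finite_nbr])
  also have "\<dots> = (\<Sum>l\<in>inN E v. I l i) - (\<Sum>l\<in>outN E v. I l i)"
    by (simp add: nbr_def Int_absorb1)
  finally show ?thesis
    using v by (simp add: dvec_def)
qed

lemma dvec_line:
  assumes v: "v \<in> P" and i: "i < 4"
  shows "dvec M E Vt I v i =
    (\<Sum>w\<in>nbr E v. \<Sum>j<dimv M w. skew_coupling M P E v w i j * zvec M Vt I w j)"
proof -
  obtain a b where ab: "inN E v = {a}" "outN E v = {b}" "src E v = a" "dst E v = b"
    using line_endpoints[OF v] .
  have inner: "(\<Sum>j<dimv M w. skew_coupling M P E v w i j * zvec M Vt I w j) =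
      (if w \<in> inN E v \<and> i < 2 then Vt w i else 0) + (if w \<in> outN E v \<and> 2 \<le> i then Vt w (i - 2) else 0)"
    if w: "w \<in> nbr E v" for w
  proof -
    have wM: "w \<in> M" "w \<notin> P" using nbr_of_line[OF v w] by auto
    have "(\<Sum>j<dimv M w. skew_coupling M P E v w i j * zvec M Vt I w j) =
        (\<Sum>j<2. line_coupling E v w i j * Vt w j)"
      using v wM by (simp add: dimv_def skew_coupling_def zvec_def)
    then show ?thesis
      using line_coupling_mult[OF i, of E v w "Vt w"] by (simp add: inN_def outN_def)
  qed
  have "nbr E v = {a, b}" using ab by (auto simp: nbr_def)
  moreover have "v \<notin> M" using v partition(2) by auto
  ultimately show ?thesis
    using ab by (auto simp: inner dvec_def sum.distrib)
qed

end

theorem lemma3: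
  fixes Vs M P :: "'a set" and E :: "('a \<times> 'a) set"
  assumes fin: "finite Vs"
    and edges: "E \<subseteq> Vs \<times> Vs"
    and noloop: "\<forall>v. (v, v) \<notin> E"
    and wconn: "weakly_connected Vs E"
    and part: "M \<union> P = Vs" "M \<inter> P = {}"
    and bip: "\<forall>(x, y)\<in>E. (x \<in> M \<and> y \<in> P) \<or> (x \<in> P \<and> y \<in> M)"
    and lines: "\<forall>l\<in>P. (\<exists>!a. (a, l) \<in> E) \<and> (\<exists>!b. (l, b) \<in> E)"
  shows "\<exists>\<phi> :: 'a \<Rightarrow> 'a \<Rightarrow> nat \<Rightarrow> nat \<Rightarrow> real.
     (\<forall>v\<in>Vs. \<forall>w\<in>nbr E v. \<forall>i<dimv M v. \<forall>j<dimv M w. \<phi> v w i j = - \<phi> w v j i)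
   \<and> (\<forall>v\<in>Vs. \<forall>w\<in>Vs. w \<notin> nbr E v \<longrightarrow> (\<forall>i<dimv M v. \<forall>j<dimv M w. \<phi> v w i j = 0))
   \<and> (\<forall>Vt I. \<forall>v\<in>Vs. \<forall>i<dimv M v.
        dvec M E Vt I v i = (\<Sum>w\<in>nbr E v. \<Sum>j<dimv M w. \<phi> v w i j * zvec M Vt I w j))"
proof (intro exI conjI ballI allI impI)
  interpret line_network Vs M P E
    using fin edges part bip lines by unfold_locales
  show "skew_coupling M P E v w i j = - skew_coupling M P E w v j i" for v w i j
    by (rule skew_coupling_antisym[OF part(2)])
  show "skew_coupling M P E v w i j = 0" if "w \<notin> nbr E v" for v w i j
    using that by (rule skew_coupling_eq_0)
  fix Vt I v i
  assume "v \<in> Vs" "i < dimv M v"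
  then consider "v \<in> M" "i < 2" | "v \<in> P" "i < 4"
    using part by (cases "v \<in> M") (auto simp: dimv_def)
  then show "dvec M E Vt I v i =
      (\<Sum>w\<in>nbr E v. \<Sum>j<dimv M w. skew_coupling M P E v w i j * zvec M Vt I w j)"
    by cases (simp_all add: dvec_node dvec_line)
qed

end
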